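(* Let $k:(0,\infty)\times(0,\infty)\to\mathbb{R}$ be a Borel-measurable kernel for which there exist $\alpha^*\in[0,1)$, $\varepsilon>0$ such that $\sup_{0<t\le T}t^{\alpha^*-\frac1{1+\varepsilon}}\|k(t,\cdot)\|_{L^{1+\varepsilon}((0,t))}<\infty$ for every $T>0$. Then for each $\lambda\in\mathbb{C}$ there exists a unique function $\Phi(\cdot,-\lambda):[0,\infty)\to\mathbb{C}$ whose restriction to $[0,T]$ belongs to $B_b([0,T],\mathbb{C})$ for every $T>0$ and which solves the Volterra equation $$\Phi(t,-\lambda)=1-\lambda\int_0^tk(t,s)\Phi(s,-\lambda)ds,\qquad t>0.$$ Moreover, $\lim_{t\searrow0}\Phi(t,-\lambda)=1$ locally uniformly in $\lambda\in\mathbb{C}$, $\Phi(t,\cdot)$ is entire for all $t\ge0$, and $\Phi(t,\lambda)=\sum_{n=0}^\infty c_n(t)\lambda^n$, where $c_0(t)=1$ for $t\ge0$ and, for $n\in\mathbb{N}$, $c_n(t)=\int_0^tk(t,s)c_{n-1}(s)ds$ for $t>0$ and $c_n(0)=0$.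
   Context: $B_b([0,T],\mathbb{C})$ denotes the Banach space of bounded Borel-measurable complex-valued functions on $[0,T]$ with the supremum norm. The value of the solution at $t=0$ is $1$ (consistent with the series). *)

theory Defs
  imports "HOL-Analysis.Analysis"
begin

definition volterra_int :: "(real \<Rightarrow> real \<Rightarrow> real) \<Rightarrow> (real \<Rightarrow> complex) \<Rightarrow> real \<Rightarrow> complex" where
  "volterra_int k f t = set_lebesgue_integral lborel {0<..<t} (\<lambda>s. complex_of_real (k t s) * f s)"

primrec coeff_c :: "(real \<Rightarrow> real \<Rightarrow> real) \<Rightarrow> nat \<Rightarrow> real \<Rightarrow> real" where
  "coeff_c k 0 t = 1"
| "coeff_c k (Suc n) t =
     (if t > 0 then set_lebesgue_integral lborel {0<..<t} (\<lambda>s. k t s * coeff_c k n s) else 0)"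

definition Bb :: "real \<Rightarrow> (real \<Rightarrow> complex) \<Rightarrow> bool" where
  "Bb T f \<longleftrightarrow> f \<in> borel_measurable (restrict_space borel {0..T}) \<and> bounded (f ` {0..T})"

definition volterra_sol :: "(real \<Rightarrow> real \<Rightarrow> real) \<Rightarrow> complex \<Rightarrow> (real \<Rightarrow> complex) \<Rightarrow> bool" where
  "volterra_sol k lam phi \<longleftrightarrow>
     (\<forall>T>0. Bb T phi) \<and> phi 0 = 1 \<and>
     (\<forall>t>0. phi t = 1 - lam * volterra_int k phi t)"

end

theory Submission imports Defs "HOL-Real_Asymp.Real_Asymp" begin

(*
  Hoelder's inequality with the conjugate exponents p = 1 + eps and q = (1 + eps)/eps turns
  the growth hypothesis into the moment estimate
    int_0^t |k(t,s)| s^r ds <= C_T (r q + 1)^(-1/q) t^(r + beta)    (0 < t <= T, beta = 1 - alpha > 0).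
  Iterating it, the n-th Volterra iterate of a function bounded by M on (0,T] is bounded by
  M a_n t^(n beta), where a_(n+1) = C_T (n beta q + 1)^(-1/q) a_n decays faster than any
  geometric sequence. As c_n is the n-th iterate of the constant 1, the series sum c_n(t) mu^n
  converges for all mu to an entire function; it may be integrated termwise, which gives the
  Volterra equation, and it tends to 1 like t^beta. Applied to the difference of two solutions,
  the same estimate with arbitrarily many iterations shows that the difference vanishes.
*)

lemma Holder_inequality_bounded:
  fixes f g :: "'a \<Rightarrow> real"
  assumes p: "p > 1" and q: "q > 1" and pq: "1/p + 1/q = 1" and A: "A > 0" and B: "B > 0"
    and fm: "f \<in> borel_measurable M" and gm: "g \<in> borel_measurable M"
    and fi: "integrable M (\<lambda>x. \<bar>f x\<bar> powr p)" and gi: "integrable M (\<lambda>x. \<bar>g x\<bar> powr q)"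
    and fb: "(\<integral>x. \<bar>f x\<bar> powr p \<partial>M) \<le> A powr p"
    and gb: "(\<integral>x. \<bar>g x\<bar> powr q \<partial>M) \<le> B powr q"
  shows "integrable M (\<lambda>x. f x * g x)" "(\<integral>x. \<bar>f x * g x\<bar> \<partial>M) \<le> A * B"
proof -
  define h where "h x = A * B * (\<bar>f x\<bar> powr p / (p * A powr p) + \<bar>g x\<bar> powr q / (q * B powr q))" for x
  have Young: "\<bar>f x * g x\<bar> \<le> h x" for x
  proof -
    have "(\<bar>f x\<bar>/A) * (\<bar>g x\<bar>/B) \<le> (\<bar>f x\<bar>/A) powr p / p + (\<bar>g x\<bar>/B) powr q / q"
      by (rule Youngs_inequality) (use p q pq A B in auto)
    also have "\<dots> = \<bar>f x\<bar> powr p / (p * A powr p) + \<bar>g x\<bar> powr q / (q * B powr q)"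
      using A B by (simp add: powr_divide mult.commute)
    finally show ?thesis
      unfolding h_def using A B by (simp add: abs_mult field_simps)
  qed
  have hi: "integrable M h" unfolding h_def using fi gi by auto
  show fgi: "integrable M (\<lambda>x. f x * g x)"
    by (rule Bochner_Integration.integrable_bound[OF hi])
      (use fm gm Young in \<open>auto intro: order.trans[OF _ abs_ge_self]\<close>)
  have "(\<integral>x. \<bar>f x * g x\<bar> \<partial>M) \<le> integral\<^sup>L M h"
    by (rule integral_mono) (use fgi hi Young in auto)
  also have "\<dots> = A * B * ((\<integral>x. \<bar>f x\<bar> powr p \<partial>M) / (p * A powr p) + (\<integral>x. \<bar>g x\<bar> powr q \<partial>M) / (q * B powr q))"
    unfolding h_def using fi gi by simp
  also have "\<dots> \<le> A * B * (A powr p / (p * A powr p) + B powr q / (q * B powr q))"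
    using A B p q fb gb by (intro mult_left_mono add_mono divide_right_mono) auto
  also have "\<dots> = A * B" using A B p q pq by simp
  finally show "(\<integral>x. \<bar>f x * g x\<bar> \<partial>M) \<le> A * B" .
qed

lemma integral_indicator_powr:
  fixes a t :: real
  assumes a: "a \<ge> 0" and t: "t > 0"
  shows "integrable lborel (\<lambda>s. indicator {0<..<t} s * s powr a)"
    and "(\<integral>s. indicator {0<..<t} s * s powr a \<partial>lborel) = t powr (a + 1) / (a + 1)"
proof -
  have "integrable lborel (\<lambda>s. t powr a * indicator {0<..<t} s :: real)"
    using t by (intro integrable_mult_right integrable_real_indicator) auto
  then show ii: "integrable lborel (\<lambda>s. indicator {0<..<t} s * s powr a)"
  proof (rule Bochner_Integration.integrable_bound)
    show "AE s in lborel. norm (indicator {0<..<t} s * s powr a) \<le> norm (t powr a * indicator {0<..<t} s :: real)"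
      using a t by (intro AE_I2) (auto simp: indicator_def intro: powr_mono2)
  qed simp
  then have si: "set_integrable lborel {0<..<t} (\<lambda>s. s powr a)"
    unfolding set_integrable_def by (simp add: mult.commute)
  have "(\<integral>s. indicator {0<..<t} s * s powr a \<partial>lborel) = integral {0<..<t} (\<lambda>s. s powr a)"
    using set_borel_integral_eq_integral(2)[OF si] unfolding set_lebesgue_integral_def by simp
  also have "\<dots> = integral {0..t} (\<lambda>s. s powr a)"
    by (simp add: integral_open_interval_real)
  also have "\<dots> = t powr (a + 1) / (a + 1)"
    using has_integral_powr_from_0[of a t] a t by (simp add: integral_unique)
  finally show "(\<integral>s. indicator {0<..<t} s * s powr a \<partial>lborel) = t powr (a + 1) / (a + 1)" .
qed

lemma integral_abs_indicator_powr_powr: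
  fixes r q t :: real
  assumes r: "r \<ge> 0" and q: "q > 0" and t: "t > 0"
  shows "integrable lborel (\<lambda>s. \<bar>indicator {0<..<t} s * s powr r\<bar> powr q)"
    and "(\<integral>s. \<bar>indicator {0<..<t} s * s powr r\<bar> powr q \<partial>lborel)
           = (t powr (r + 1 / q) * (r * q + 1) powr (- (1 / q))) powr q"
proof -
  have rq: "r * q + 1 > 0" using r q by (simp add: add_nonneg_pos)
  have eq: "\<bar>indicator {0<..<t} s * s powr r\<bar> powr q = indicator {0<..<t} s * s powr (r * q)" for s
    using q by (auto simp: indicator_def powr_powr)
  show "integrable lborel (\<lambda>s. \<bar>indicator {0<..<t} s * s powr r\<bar> powr q)"
    unfolding eq using integral_indicator_powr(1) r q t by simp
  have exps: "(r + 1 / q) * q = r * q + 1" "- (1 / q) * q = - 1"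
    using q by (simp_all add: field_simps)
  have "(t powr (r + 1 / q) * (r * q + 1) powr (- (1 / q))) powr q
      = t powr ((r + 1 / q) * q) * (r * q + 1) powr (- (1 / q) * q)"
    using t rq by (simp add: powr_mult powr_powr)
  also have "\<dots> = t powr (r * q + 1) / (r * q + 1)"
    unfolding exps using rq by (simp add: powr_minus_divide)
  finally have "(t powr (r + 1 / q) * (r * q + 1) powr (- (1 / q))) powr q = t powr (r * q + 1) / (r * q + 1)" .
  then show "(\<integral>s. \<bar>indicator {0<..<t} s * s powr r\<bar> powr q \<partial>lborel)
      = (t powr (r + 1 / q) * (r * q + 1) powr (- (1 / q))) powr q"
    unfolding eq using integral_indicator_powr(2) r q t by simp
qed

lemma sums_integral_dominated:
  fixes F :: "nat \<Rightarrow> 'a \<Rightarrow> 'b::{banach, second_countable_topology}"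
  assumes F: "\<And>n. integrable M (F n)" and h: "integrable M h" and a: "summable a"
    and bound: "\<And>n x. norm (F n x) \<le> h x * a n"
  shows "(\<lambda>n. integral\<^sup>L M (F n)) sums (\<integral>x. (\<Sum>n. F n x) \<partial>M)"
proof (rule sums_integral[OF F])
  show "AE x in M. summable (\<lambda>n. norm (F n x))"
    using bound by (intro AE_I2 summable_comparison_test'[OF summable_mult[OF a]]) auto
  show "summable (\<lambda>n. \<integral>x. norm (F n x) \<partial>M)"
  proof (rule summable_comparison_test'[OF summable_mult2[OF a]])
    fix n
    have "(\<integral>x. norm (F n x) \<partial>M) \<le> (\<integral>x. h x * a n \<partial>M)"
      using h bound by (intro integral_mono integrable_norm F) auto
    then show "norm (\<integral>x. norm (F n x) \<partial>M) \<le> a n * integral\<^sup>L M h"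
      by (simp add: mult.commute)
  qed
qed

text \<open>Up to exponential factors, moment_coeff C b e n decays like (n!) powr (- e).\<close>
primrec moment_coeff :: "real \<Rightarrow> real \<Rightarrow> real \<Rightarrow> nat \<Rightarrow> real" where
  "moment_coeff C b e 0 = 1"
| "moment_coeff C b e (Suc n) = C * (real n * b + 1) powr (- e) * moment_coeff C b e n"

lemma moment_coeff_pos:
  assumes "C > 0" "b \<ge> 0"
  shows "moment_coeff C b e n > 0"
proof (induction n)
  case (Suc n)
  have "real n * b + 1 > 0" using assms by (simp add: add_nonneg_pos)
  then show ?case using Suc assms by simp
qed simp

lemma summable_moment_coeff_power:
  assumes C: "C > 0" and b: "b > 0" and e: "e > 0" and x: "x \<ge> 0"
  shows "summable (\<lambda>n. moment_coeff C b e n * x ^ n)"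
proof -
  have "((\<lambda>n. (real n * b + 1) powr (- e)) \<longlongrightarrow> 0) sequentially"
    using b e by real_asymp
  then have "eventually (\<lambda>n. (real n * b + 1) powr (- e) < 1 / (2 * (C * x + 1))) sequentially"
    by (rule order_tendstoD(2)) (use C x in \<open>auto intro!: add_nonneg_pos\<close>)
  then obtain N where N: "\<And>n. n \<ge> N \<Longrightarrow> (real n * b + 1) powr (- e) < 1 / (2 * (C * x + 1))"
    by (auto simp: eventually_sequentially)
  show ?thesis
  proof (rule summable_ratio_test[of "1/2" N])
    fix n assume n: "n \<ge> N"
    have coeff: "moment_coeff C b e n > 0" using moment_coeff_pos[OF C, of b e n] b by simp
    then have pos: "moment_coeff C b e n * x ^ n \<ge> 0" using x by simp
    have "C * x * (real n * b + 1) powr (- e) \<le> C * x * (1 / (2 * (C * x + 1)))"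
      using N[OF n] C x by (intro mult_left_mono) auto
    also have "\<dots> \<le> 1/2" using C x by (simp add: divide_simps) (smt (verit) mult_nonneg_nonneg)
    finally have ratio: "C * x * (real n * b + 1) powr (- e) \<le> 1/2" .
    have "norm (moment_coeff C b e (Suc n) * x ^ Suc n)
        = (C * x * (real n * b + 1) powr (- e)) * (moment_coeff C b e n * x ^ n)"
      using coeff C x by (simp add: abs_mult mult_ac)
    also have "\<dots> \<le> 1/2 * norm (moment_coeff C b e n * x ^ n)"
      using mult_right_mono[OF ratio pos] pos by simp
    finally show "norm (moment_coeff C b e (Suc n) * x ^ Suc n) \<le> 1/2 * norm (moment_coeff C b e n * x ^ n)" .
  qed simp
qed

locale volterra_kernel =
  fixes k :: "real \<Rightarrow> real \<Rightarrow> real" and \<alpha> \<epsilon> :: real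
  assumes k_measurable: "(\<lambda>p. k (fst p) (snd p)) \<in> borel_measurable (restrict_space borel ({0<..} \<times> {0<..}))"
    and \<alpha>: "\<alpha> < 1" and \<epsilon>: "\<epsilon> > 0"
    and growth: "\<forall>T>0. \<exists>C. \<forall>t\<in>{0<..T}.
          set_integrable lborel {0<..<t} (\<lambda>s. \<bar>k t s\<bar> powr (1 + \<epsilon>)) \<and>
          t powr (\<alpha> - 1 / (1 + \<epsilon>)) *
            (set_lebesgue_integral lborel {0<..<t} (\<lambda>s. \<bar>k t s\<bar> powr (1 + \<epsilon>))) powr (1 / (1 + \<epsilon>))
          \<le> C"
begin

definition q :: real where "q = (1 + \<epsilon>) / \<epsilon>"
definition \<beta> :: real where "\<beta> = 1 - \<alpha>"

lemma exponents: "1 + \<epsilon> > 1" "q > 1" "1 / (1 + \<epsilon>) + 1 / q = 1" "\<beta> > 0"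
  using \<epsilon> \<alpha> by (auto simp: q_def \<beta>_def field_simps)

definition kernel_norm :: "real \<Rightarrow> real" where
  "kernel_norm t = (LINT s:{0<..<t}|lborel. \<bar>k t s\<bar> powr (1 + \<epsilon>)) powr (1 / (1 + \<epsilon>))"

definition growth_const :: "real \<Rightarrow> real" where
  "growth_const T = max 1 (SOME C. \<forall>t\<in>{0<..T}. t powr (\<alpha> - 1 / (1 + \<epsilon>)) * kernel_norm t \<le> C)"

lemma growth_const_pos: "growth_const T > 0"
  unfolding growth_const_def by linarith

lemma growth_const_bound:
  assumes "0 < t" "t \<le> T"
  shows "t powr (\<alpha> - 1 / (1 + \<epsilon>)) * kernel_norm t \<le> growth_const T"
proof -
  have "T > 0" using assms by simp
  with growth have "\<exists>C. \<forall>t\<in>{0<..T}. t powr (\<alpha> - 1 / (1 + \<epsilon>)) * kernel_norm t \<le> C"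
    unfolding kernel_norm_def by blast
  from someI_ex[OF this] have "t powr (\<alpha> - 1 / (1 + \<epsilon>)) * kernel_norm t
      \<le> (SOME C. \<forall>t\<in>{0<..T}. t powr (\<alpha> - 1 / (1 + \<epsilon>)) * kernel_norm t \<le> C)"
    using assms by simp
  then show ?thesis unfolding growth_const_def by (rule max.coboundedI2)
qed

definition k0 :: "real \<Rightarrow> real \<Rightarrow> real" where
  "k0 t s = (if 0 < s \<and> s < t then k t s else 0)"

lemma k0_measurable_borel: "(\<lambda>x. k0 (fst x) (snd x)) \<in> borel_measurable borel"
proof -
  have "open ({0<..} \<times> {0<..} :: (real \<times> real) set)" by (intro open_Times) auto
  then have quadrant: "(\<lambda>x. indicator ({0<..} \<times> {0<..}) x *\<^sub>R k (fst x) (snd x)) \<in> borel_measurable borel"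
    using borel_measurable_restrict_space_iff[THEN iffD1, OF _ k_measurable] by auto
  have "open {x::real \<times> real. 0 < snd x \<and> snd x < fst x}"
    by (intro open_Collect_conj open_Collect_less continuous_intros)
  then have triangle: "(\<lambda>x. indicator {x::real \<times> real. 0 < snd x \<and> snd x < fst x} x :: real) \<in> borel_measurable borel"
    by (intro borel_measurable_indicator) auto
  have "(\<lambda>x. k0 (fst x) (snd x)) = (\<lambda>x. indicator {x. 0 < snd x \<and> snd x < fst x} x
          * (indicator ({0<..} \<times> {0<..}) x *\<^sub>R k (fst x) (snd x)))"
    by (auto simp: k0_def indicator_def fun_eq_iff)
  then show ?thesis using quadrant triangle by simp
qed

lemma k0_measurable_pair: "(\<lambda>x. k0 (fst x) (snd x)) \<in> borel_measurable (borel \<Otimes>\<^sub>M lborel)"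
proof -
  have "sets (borel \<Otimes>\<^sub>M lborel) = sets (borel :: (real \<times> real) measure)"
    by (metis borel_prod sets_lborel sets_pair_measure_cong)
  then show ?thesis using k0_measurable_borel by (simp cong: measurable_cong_sets)
qed

lemma k0_measurable [measurable]: "k0 t \<in> borel_measurable borel"
proof -
  have "(\<lambda>s. (t, s)) \<in> borel_measurable (borel :: real measure)"
    by (intro borel_measurable_continuous_onI continuous_intros)
  from measurable_compose[OF this k0_measurable_borel] show ?thesis by simp
qed

lemma kernel_norm_le:
  assumes "0 < t" "t \<le> T"
  shows "kernel_norm t \<le> growth_const T * t powr (1 / (1 + \<epsilon>) - \<alpha>)"
proof -
  have "kernel_norm t = t powr (1 / (1 + \<epsilon>) - \<alpha>) * (t powr (\<alpha> - 1 / (1 + \<epsilon>)) * kernel_norm t)"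
    using assms by (simp add: powr_add[symmetric])
  also have "\<dots> \<le> t powr (1 / (1 + \<epsilon>) - \<alpha>) * growth_const T"
    by (intro mult_left_mono growth_const_bound assms) simp
  finally show ?thesis by (simp add: mult.commute)
qed

lemma k0_abs_powr: "\<bar>k0 t s\<bar> powr (1 + \<epsilon>) = indicator {0<..<t} s *\<^sub>R \<bar>k t s\<bar> powr (1 + \<epsilon>)"
  using \<epsilon> by (auto simp: k0_def indicator_def)

lemma k0_powr_integrable: "t > 0 \<Longrightarrow> integrable lborel (\<lambda>s. \<bar>k0 t s\<bar> powr (1 + \<epsilon>))"
  using growth unfolding k0_abs_powr set_integrable_def[symmetric] by fastforce

lemma k0_powr_integral_le:
  assumes "0 < t" "t \<le> T"
  shows "(\<integral>s. \<bar>k0 t s\<bar> powr (1 + \<epsilon>) \<partial>lborel) \<le> (growth_const T * t powr (1 / (1 + \<epsilon>) - \<alpha>)) powr (1 + \<epsilon>)"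
proof -
  define I where "I = (LINT s:{0<..<t}|lborel. \<bar>k t s\<bar> powr (1 + \<epsilon>))"
  have "I \<ge> 0" unfolding I_def set_lebesgue_integral_def
    by (intro Bochner_Integration.integral_nonneg) (auto simp: indicator_def)
  then have "I = kernel_norm t powr (1 + \<epsilon>)"
    using \<epsilon> unfolding kernel_norm_def I_def by (simp add: powr_powr)
  also have "\<dots> \<le> (growth_const T * t powr (1 / (1 + \<epsilon>) - \<alpha>)) powr (1 + \<epsilon>)"
    using kernel_norm_le[OF assms] \<epsilon> by (intro powr_mono2) (auto simp: kernel_norm_def)
  finally show ?thesis unfolding k0_abs_powr I_def set_lebesgue_integral_def .
qed

lemma k0_moment_bound:
  assumes t: "0 < t" "t \<le> T" and r: "r \<ge> 0"
  shows "integrable lborel (\<lambda>s. \<bar>k0 t s\<bar> * s powr r)"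
    and "(\<integral>s. \<bar>k0 t s\<bar> * s powr r \<partial>lborel) \<le> growth_const T * (r * q + 1) powr (- (1 / q)) * t powr (r + \<beta>)"
proof -
  define A where "A = growth_const T * t powr (1 / (1 + \<epsilon>) - \<alpha>)"
  define B where "B = t powr (r + 1 / q) * (r * q + 1) powr (- (1 / q))"
  define g where "g s = indicator {0<..<t} s * s powr r" for s
  have A: "A > 0" unfolding A_def using growth_const_pos t by simp
  have "r * q + 1 > 0" using r exponents by (simp add: add_nonneg_pos)
  then have B: "B > 0" unfolding B_def using t by simp
  have fb: "(\<integral>s. \<bar>k0 t s\<bar> powr (1 + \<epsilon>) \<partial>lborel) \<le> A powr (1 + \<epsilon>)"
    unfolding A_def by (rule k0_powr_integral_le[OF t])
  have gi: "integrable lborel (\<lambda>s. \<bar>g s\<bar> powr q)"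
    and gb: "(\<integral>s. \<bar>g s\<bar> powr q \<partial>lborel) \<le> B powr q"
    unfolding g_def B_def using integral_abs_indicator_powr_powr[OF r _ t(1), of q] exponents by auto
  have fg: "\<bar>k0 t s * g s\<bar> = \<bar>k0 t s\<bar> * s powr r" for s
    unfolding g_def by (auto simp: k0_def indicator_def abs_mult)
  note Holder = Holder_inequality_bounded[OF exponents(1-3) A B _ _ k0_powr_integrable[OF t(1)] gi fb gb]
  show "integrable lborel (\<lambda>s. \<bar>k0 t s\<bar> * s powr r)"
    using integrable_abs[OF Holder(1)] unfolding fg by (simp add: g_def)
  have "(\<integral>s. \<bar>k0 t s\<bar> * s powr r \<partial>lborel) \<le> A * B"
    using Holder(2) unfolding fg by (simp add: g_def)
  also have "\<dots> = growth_const T * (r * q + 1) powr (- (1 / q))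
      * (t powr (1 / (1 + \<epsilon>) - \<alpha>) * t powr (r + 1 / q))"
    unfolding A_def B_def by (simp add: mult_ac)
  also have "t powr (1 / (1 + \<epsilon>) - \<alpha>) * t powr (r + 1 / q) = t powr (r + \<beta>)"
  proof -
    have "1 / (1 + \<epsilon>) - \<alpha> + (r + 1 / q) = r + \<beta>" using exponents(3) unfolding \<beta>_def by linarith
    then show ?thesis by (subst powr_add[symmetric]) (rule arg_cong)
  qed
  finally show "(\<integral>s. \<bar>k0 t s\<bar> * s powr r \<partial>lborel) \<le> growth_const T * (r * q + 1) powr (- (1 / q)) * t powr (r + \<beta>)" .
qed

lemma k0_integral_bound:
  fixes f :: "real \<Rightarrow> 'a::{banach, second_countable_topology}"
  assumes t: "0 < t" "t \<le> T" and r: "r \<ge> 0" and M: "M \<ge> 0"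
    and f: "f \<in> borel_measurable lborel"
    and bound: "\<And>s. 0 < s \<Longrightarrow> s < t \<Longrightarrow> norm (f s) \<le> M * s powr r"
  shows "integrable lborel (\<lambda>s. k0 t s *\<^sub>R f s)"
    and "norm (\<integral>s. k0 t s *\<^sub>R f s \<partial>lborel)
           \<le> M * growth_const T * (r * q + 1) powr (- (1 / q)) * t powr (r + \<beta>)"
proof -
  have majorant: "integrable lborel (\<lambda>s. M * (\<bar>k0 t s\<bar> * s powr r))"
    using k0_moment_bound(1)[OF t r] by simp
  have pointwise: "norm (k0 t s *\<^sub>R f s) \<le> M * (\<bar>k0 t s\<bar> * s powr r)" for s
  proof (cases "0 < s \<and> s < t")
    case True
    then have "\<bar>k0 t s\<bar> * norm (f s) \<le> \<bar>k0 t s\<bar> * (M * s powr r)"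
      using bound by (intro mult_left_mono) auto
    then show ?thesis by (simp add: mult_ac)
  qed (auto simp: k0_def)
  show fi: "integrable lborel (\<lambda>s. k0 t s *\<^sub>R f s)"
    by (rule Bochner_Integration.integrable_bound[OF majorant])
      (use f pointwise in \<open>auto intro: order.trans[OF _ abs_ge_self]\<close>)
  have "norm (\<integral>s. k0 t s *\<^sub>R f s \<partial>lborel) \<le> (\<integral>s. M * (\<bar>k0 t s\<bar> * s powr r) \<partial>lborel)"
    by (rule Bochner_Integration.integral_norm_bound_integral[OF fi majorant pointwise])
  also have "\<dots> = M * (\<integral>s. \<bar>k0 t s\<bar> * s powr r \<partial>lborel)" by simp
  also have "\<dots> \<le> M * (growth_const T * (r * q + 1) powr (- (1 / q)) * t powr (r + \<beta>))"
    using k0_moment_bound(2)[OF t r] M by (intro mult_left_mono) auto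
  finally show "norm (\<integral>s. k0 t s *\<^sub>R f s \<partial>lborel)
      \<le> M * growth_const T * (r * q + 1) powr (- (1 / q)) * t powr (r + \<beta>)"
    by (simp add: mult_ac)
qed

abbreviation iter_const :: "real \<Rightarrow> nat \<Rightarrow> real" where
  "iter_const T \<equiv> moment_coeff (growth_const T) (\<beta> * q) (1 / q)"

lemma iter_const_pos: "iter_const T n > 0"
  using moment_coeff_pos[OF growth_const_pos] exponents by simp

lemma summable_iter_const_power: "x \<ge> 0 \<Longrightarrow> summable (\<lambda>n. iter_const T n * x ^ n)"
  using summable_moment_coeff_power[OF growth_const_pos] exponents by simp

lemma iterated_volterra_bound:
  fixes g :: "nat \<Rightarrow> real \<Rightarrow> 'a::{banach, second_countable_topology}"
  assumes M: "M \<ge> 0" and L: "L \<ge> 0"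
    and meas: "\<And>n. g n \<in> borel_measurable lborel"
    and base: "\<And>t. 0 < t \<Longrightarrow> t \<le> T \<Longrightarrow> norm (g 0 t) \<le> M"
    and step: "\<And>n t. 0 < t \<Longrightarrow> t \<le> T \<Longrightarrow>
                 norm (g (Suc n) t) \<le> L * norm (\<integral>s. k0 t s *\<^sub>R g n s \<partial>lborel)"
    and t: "0 < t" "t \<le> T"
  shows "norm (g n t) \<le> M * L ^ n * iter_const T n * t powr (real n * \<beta>)"
  using t
proof (induction n arbitrary: t)
  case 0
  then show ?case using base by simp
next
  case (Suc n)
  have "norm (g (Suc n) t) \<le> L * norm (\<integral>s. k0 t s *\<^sub>R g n s \<partial>lborel)"
    by (rule step[OF Suc.prems])
  also have "\<dots> \<le> L * (M * L ^ n * iter_const T n * growth_const T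
      * (real n * \<beta> * q + 1) powr (- (1 / q)) * t powr (real n * \<beta> + \<beta>))"
    using Suc exponents M L iter_const_pos[of T n]
    by (intro mult_left_mono k0_integral_bound(2) meas) auto
  also have "\<dots> = M * L ^ Suc n * iter_const T (Suc n) * t powr (real (Suc n) * \<beta>)"
    by (simp add: algebra_simps)
  finally show ?case .
qed

abbreviation c :: "nat \<Rightarrow> real \<Rightarrow> real" where
  "c \<equiv> coeff_c k"

lemma coeff_c_Suc_k0: "c (Suc n) t = (\<integral>s. k0 t s * c n s \<partial>lborel)"
proof (cases "t > 0")
  case True
  then show ?thesis unfolding coeff_c.simps set_lebesgue_integral_def
    by (auto intro!: Bochner_Integration.integral_cong simp: k0_def indicator_def)
next
  case False
  then have "k0 t s = 0" for s by (simp add: k0_def)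
  with False show ?thesis by simp
qed

lemma coeff_c_measurable [measurable]: "c n \<in> borel_measurable borel"
proof (induction n)
  case (Suc n)
  then have "(\<lambda>x. k0 (fst x) (snd x) * c n (snd x)) \<in> borel_measurable (borel \<Otimes>\<^sub>M lborel)"
    using k0_measurable_pair by measurable
  then have "(\<lambda>t. \<integral>s. k0 t s * c n s \<partial>lborel) \<in> borel_measurable borel"
    by (intro lborel.borel_measurable_lebesgue_integral) (simp add: case_prod_beta')
  then show ?case by (simp add: coeff_c_Suc_k0[abs_def])
qed simp

lemma coeff_c_bound:
  assumes "0 < t" "t \<le> T"
  shows "\<bar>c n t\<bar> \<le> iter_const T n * t powr (real n * \<beta>)"
proof -
  have "norm (c n t) \<le> 1 * 1 ^ n * iter_const T n * t powr (real n * \<beta>)"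
    by (rule iterated_volterra_bound)
      (use assms in \<open>auto simp del: coeff_c.simps(2) simp add: coeff_c_Suc_k0\<close>)
  then show ?thesis by simp
qed

lemma coeff_c_term_bound:
  assumes "t \<le> T" "T > 0"
  shows "norm (complex_of_real (c n t) * \<mu> ^ n) \<le> iter_const T n * (T powr \<beta> * norm \<mu>) ^ n"
proof -
  have "\<bar>c n t\<bar> \<le> iter_const T n * (T powr \<beta>) ^ n"
  proof (cases "t > 0")
    case True
    then have "\<bar>c n t\<bar> \<le> iter_const T n * t powr (real n * \<beta>)"
      using coeff_c_bound assms by blast
    also have "\<dots> \<le> iter_const T n * T powr (real n * \<beta>)"
      using True assms exponents iter_const_pos[of T n] by (intro mult_left_mono powr_mono2) auto
    finally show ?thesis using assms by (simp add: powr_power)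
  next
    case False
    then show ?thesis using iter_const_pos[of T n] by (cases n) auto
  qed
  then have "\<bar>c n t\<bar> * norm \<mu> ^ n \<le> iter_const T n * (T powr \<beta>) ^ n * norm \<mu> ^ n"
    by (rule mult_right_mono) simp
  then show ?thesis by (simp add: norm_mult norm_power power_mult_distrib mult_ac)
qed

definition Phi :: "real \<Rightarrow> complex \<Rightarrow> complex" where
  "Phi t \<mu> = (\<Sum>n. complex_of_real (c n t) * \<mu> ^ n)"

lemma summable_coeff_c_power: "summable (\<lambda>n. complex_of_real (c n t) * \<mu> ^ n)"
  by (rule summable_comparison_test'[OF summable_iter_const_power coeff_c_term_bound[of t "max t 1"]])
    auto

lemma Phi_sums: "(\<lambda>n. complex_of_real (c n t) * \<mu> ^ n) sums Phi t \<mu>"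
  unfolding Phi_def using summable_coeff_c_power by (rule summable_sums)

lemma Phi_bound:
  assumes "t \<le> T" "T > 0"
  shows "norm (Phi t \<mu>) \<le> (\<Sum>n. iter_const T n * (T powr \<beta> * norm \<mu>) ^ n)"
  unfolding Phi_def
  by (rule norm_suminf_le[OF coeff_c_term_bound[OF assms] summable_iter_const_power]) simp

lemma Phi_holomorphic: "Phi t holomorphic_on UNIV"
proof -
  have "(Phi t has_field_derivative (\<Sum>n. diffs (\<lambda>n. complex_of_real (c n t)) n * \<mu> ^ n)) (at \<mu>)" for \<mu>
    unfolding Phi_def[abs_def]
    by (rule termdiffs_strong_converges_everywhere) (rule summable_coeff_c_power)
  then show ?thesis
    unfolding holomorphic_on_def field_differentiable_def by blast
qed

lemma Phi_nonpos: assumes "t \<le> 0" shows "Phi t \<mu> = 1"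
proof -
  have "(\<lambda>n. complex_of_real (c n t) * \<mu> ^ n) = (\<lambda>n. if n = 0 then 1 else 0)"
    using assms by (auto simp: fun_eq_iff gr0_conv_Suc not0_implies_Suc)
  then have "(\<lambda>n. complex_of_real (c n t) * \<mu> ^ n) sums 1"
    using sums_single[of 0 "\<lambda>_. 1::complex"] by simp
  then show ?thesis using Phi_sums sums_unique2 by blast
qed

lemma Phi_measurable [measurable]: "(\<lambda>t. Phi t \<mu>) \<in> borel_measurable borel"
proof (rule borel_measurable_LIMSEQ_metric)
  show "(\<lambda>t. \<Sum>n<i. complex_of_real (c n t) * \<mu> ^ n) \<in> borel_measurable borel" for i
    by measurable
  show "(\<lambda>i. \<Sum>n<i. complex_of_real (c n t) * \<mu> ^ n) \<longlonglongrightarrow> Phi t \<mu>" for t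
    using Phi_sums[of t \<mu>] unfolding sums_def .
qed

lemma volterra_int_k0: "volterra_int k f t = (\<integral>s. k0 t s *\<^sub>R f s \<partial>lborel)"
  unfolding volterra_int_def set_lebesgue_integral_def
  by (intro Bochner_Integration.integral_cong) (auto simp: k0_def indicator_def scaleR_conv_of_real)

lemma k0_abs_integrable:
  assumes "t > 0"
  shows "integrable lborel (\<lambda>s. \<bar>k0 t s\<bar>)"
proof -
  have "(\<lambda>s. \<bar>k0 t s\<bar> * s powr 0) = (\<lambda>s. \<bar>k0 t s\<bar>)" by (auto simp: k0_def fun_eq_iff)
  with k0_moment_bound(1)[of t t 0] assms show ?thesis by simp
qed

lemma integral_k0_Phi_sums:
  assumes t: "t > 0"
  shows "(\<lambda>n. complex_of_real (c (Suc n) t) * \<mu> ^ n) sums (\<integral>s. k0 t s *\<^sub>R Phi s \<mu> \<partial>lborel)"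
proof -
  define F where "F n s = (k0 t s * c n s) *\<^sub>R \<mu> ^ n" for n s
  define a where "a n = iter_const t n * (t powr \<beta> * norm \<mu>) ^ n" for n
  have a: "summable a"
    unfolding a_def by (rule summable_iter_const_power) simp
  have k0_c_integrable: "integrable lborel (\<lambda>s. k0 t s * c n s)" for n
    using t exponents iter_const_pos[of t n] coeff_c_bound[of _ t n]
      k0_integral_bound(1)[of t t "real n * \<beta>" "iter_const t n" "c n"]
    by auto
  then have F_integrable: "integrable lborel (F n)" for n
    unfolding F_def[abs_def] by simp
  have F_bound: "norm (F n s) \<le> \<bar>k0 t s\<bar> * a n" for n s
  proof (cases "k0 t s = 0")
    case False
    then have "s < t" by (auto simp: k0_def split: if_splits)
    then have "norm (complex_of_real (c n s) * \<mu> ^ n) \<le> a n"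
      unfolding a_def using t by (intro coeff_c_term_bound) auto
    then have "\<bar>k0 t s\<bar> * (\<bar>c n s\<bar> * norm \<mu> ^ n) \<le> \<bar>k0 t s\<bar> * a n"
      by (simp add: norm_mult norm_power mult_left_mono)
    then show ?thesis unfolding F_def by (simp add: abs_mult norm_power mult.assoc)
  qed (simp add: F_def)
  have "(\<lambda>n. integral\<^sup>L lborel (F n)) sums (\<integral>s. (\<Sum>n. F n s) \<partial>lborel)"
    by (rule sums_integral_dominated[OF F_integrable k0_abs_integrable[OF t] a F_bound])
  moreover have "integral\<^sup>L lborel (F n) = complex_of_real (c (Suc n) t) * \<mu> ^ n" for n
  proof -
    have "integral\<^sup>L lborel (F n) = (\<integral>s. k0 t s * c n s \<partial>lborel) *\<^sub>R \<mu> ^ n"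
      unfolding F_def[abs_def] using k0_c_integrable by simp
    then show ?thesis by (simp del: coeff_c.simps(2) add: coeff_c_Suc_k0 scaleR_conv_of_real)
  qed
  moreover have "(\<Sum>n. F n s) = k0 t s *\<^sub>R Phi s \<mu>" for s
    using sums_scaleR_right[OF Phi_sums, of "k0 t s" s \<mu>]
    unfolding F_def by (simp add: sums_iff scaleR_conv_of_real mult_ac)
  ultimately show ?thesis by simp
qed

lemma Phi_volterra:
  assumes "t > 0"
  shows "Phi t \<mu> = 1 + \<mu> * (\<integral>s. k0 t s *\<^sub>R Phi s \<mu> \<partial>lborel)"
proof -
  have "(\<lambda>n. complex_of_real (c (Suc n) t) * \<mu> ^ Suc n) sums (\<mu> * (\<integral>s. k0 t s *\<^sub>R Phi s \<mu> \<partial>lborel))"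
    using sums_mult[OF integral_k0_Phi_sums[OF assms], of \<mu>] by (simp add: mult_ac)
  then have "(\<lambda>n. complex_of_real (c n t) * \<mu> ^ n) sums (\<mu> * (\<integral>s. k0 t s *\<^sub>R Phi s \<mu> \<partial>lborel) + 1)"
    by (subst (asm) sums_Suc_iff) simp
  then show ?thesis using Phi_sums sums_unique2 by (metis add.commute)
qed

lemma Phi_minus_one_bound:
  assumes t: "0 < t" "t \<le> 1" and \<mu>: "norm \<mu> \<le> R"
  shows "norm (Phi t \<mu> - 1) \<le> t powr \<beta> * (\<Sum>n. iter_const 1 (Suc n) * R ^ Suc n)"
proof -
  have R: "R \<ge> 0" using \<mu> norm_ge_zero order_trans by blast
  have summable: "summable (\<lambda>n. iter_const 1 (Suc n) * R ^ Suc n)"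
    using summable_iter_const_power[OF R] by (subst summable_Suc_iff)
  have term_bound: "norm (complex_of_real (c (Suc n) t) * \<mu> ^ Suc n)
      \<le> t powr \<beta> * (iter_const 1 (Suc n) * R ^ Suc n)" for n
  proof -
    have "\<bar>c (Suc n) t\<bar> \<le> iter_const 1 (Suc n) * t powr (real (Suc n) * \<beta>)"
      using coeff_c_bound t by blast
    also have "\<dots> \<le> iter_const 1 (Suc n) * t powr \<beta>"
      using t exponents iter_const_pos[of 1 "Suc n"] by (intro mult_left_mono powr_mono') auto
    finally have "\<bar>c (Suc n) t\<bar> * norm \<mu> ^ Suc n \<le> iter_const 1 (Suc n) * t powr \<beta> * R ^ Suc n"
      using \<mu> by (intro mult_mono power_mono) auto
    then show ?thesis by (simp add: norm_mult norm_power mult_ac)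
  qed
  have "(\<lambda>n. complex_of_real (c (Suc n) t) * \<mu> ^ Suc n) sums (Phi t \<mu> - 1)"
    using Phi_sums[of t \<mu>] by (subst sums_Suc_iff) simp
  then have "norm (Phi t \<mu> - 1) \<le> (\<Sum>n. t powr \<beta> * (iter_const 1 (Suc n) * R ^ Suc n))"
    using norm_suminf_le[OF term_bound summable_mult[OF summable]] by (simp add: sums_iff)
  also have "\<dots> = t powr \<beta> * (\<Sum>n. iter_const 1 (Suc n) * R ^ Suc n)"
    by (rule suminf_mult[OF summable])
  finally show ?thesis .
qed

lemma Phi_uniform_limit:
  assumes "compact K"
  shows "uniform_limit K (\<lambda>t lam. Phi t (- lam)) (\<lambda>_. 1) (at_right 0)"
  unfolding uniform_limit_iff
proof (intro allI impI)
  fix e :: real assume e: "e > 0"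
  obtain R where R: "\<And>y. y \<in> K \<Longrightarrow> norm y \<le> R"
    using compact_imp_bounded[OF assms] bounded_iff by blast
  define S where "S = (\<Sum>n. iter_const 1 (Suc n) * R ^ Suc n)"
  have "((\<lambda>t. t powr \<beta> * S) \<longlongrightarrow> 0 * S) (at_right 0)"
    using exponents(4) by (intro tendsto_mult tendsto_const) real_asymp
  then have "eventually (\<lambda>t. t powr \<beta> * S < e) (at_right 0)"
    using e by (intro order_tendstoD(2)) auto
  moreover have "eventually (\<lambda>t. 0 < t \<and> t \<le> 1) (at_right (0::real))"
    by (rule eventually_at_rightI[of 0 1]) auto
  ultimately show "eventually (\<lambda>t. \<forall>y\<in>K. dist (Phi t (- y)) 1 < e) (at_right 0)"
  proof eventually_elim
    case (elim t)
    show ?case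
    proof
      fix y assume "y \<in> K"
      then have "norm (Phi t (- y) - 1) \<le> t powr \<beta> * S"
        unfolding S_def using elim R by (intro Phi_minus_one_bound) auto
      then show "dist (Phi t (- y)) 1 < e" using elim by (simp add: dist_norm)
    qed
  qed
qed

lemma Phi_volterra_sol: "volterra_sol k lam (\<lambda>t. Phi t (- lam))"
  unfolding volterra_sol_def Bb_def
proof (intro conjI allI impI)
  fix T :: real assume T: "T > 0"
  show "(\<lambda>t. Phi t (- lam)) \<in> borel_measurable (restrict_space borel {0..T})"
    by (rule measurable_restrict_space1) simp
  show "bounded ((\<lambda>t. Phi t (- lam)) ` {0..T})"
    unfolding bounded_iff using Phi_bound[OF _ T, of _ "- lam"]
    by (intro exI[of _ "\<Sum>n. iter_const T n * (T powr \<beta> * norm lam) ^ n"]) auto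
next
  show "Phi 0 (- lam) = 1" by (simp add: Phi_nonpos)
next
  fix t :: real assume "t > 0"
  then show "Phi t (- lam) = 1 - lam * volterra_int k (\<lambda>t. Phi t (- lam)) t"
    unfolding volterra_int_k0 using Phi_volterra[of t "- lam"] by simp
qed

lemma volterra_eq_unique:
  fixes f g :: "real \<Rightarrow> complex"
  assumes T: "T > 0" and meas: "f \<in> borel_measurable lborel" "g \<in> borel_measurable lborel"
    and bounded: "\<And>t. 0 < t \<Longrightarrow> t \<le> T \<Longrightarrow> norm (f t) \<le> M \<and> norm (g t) \<le> M"
    and f_eq: "\<And>t. 0 < t \<Longrightarrow> t \<le> T \<Longrightarrow> f t = 1 - lam * (\<integral>s. k0 t s *\<^sub>R f s \<partial>lborel)"
    and g_eq: "\<And>t. 0 < t \<Longrightarrow> t \<le> T \<Longrightarrow> g t = 1 - lam * (\<integral>s. k0 t s *\<^sub>R g s \<partial>lborel)"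
  shows "f T = g T"
proof -
  have M: "M \<ge> 0" using bounded[OF T order.refl] norm_ge_zero order_trans by blast
  define d where "d t = f t - g t" for t
  have d_measurable: "d \<in> borel_measurable lborel"
    unfolding d_def[abs_def] using meas by simp
  have d_bounded: "norm (d t) \<le> 2 * M" if "0 < t" "t \<le> T" for t
    using norm_triangle_ineq4[of "f t" "g t"] bounded[OF that] unfolding d_def by simp
  have step: "norm (d t) \<le> norm lam * norm (\<integral>s. k0 t s *\<^sub>R d s \<partial>lborel)" if t: "0 < t" "t \<le> T" for t
  proof -
    have "integrable lborel (\<lambda>s. k0 t s *\<^sub>R f s)" "integrable lborel (\<lambda>s. k0 t s *\<^sub>R g s)"
      using t M bounded meas by (auto intro!: k0_integral_bound(1)[of t T 0 M])
    then have "d t = - lam * (\<integral>s. k0 t s *\<^sub>R d s \<partial>lborel)"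
      using f_eq[OF t] g_eq[OF t] unfolding d_def by (simp add: algebra_simps)
    then show ?thesis by (simp add: norm_mult)
  qed
  have "norm (d T) \<le> 2 * M * norm lam ^ n * iter_const T n * T powr (real n * \<beta>)" for n
    by (rule iterated_volterra_bound[where g = "\<lambda>_. d"]) (use T d_measurable M d_bounded step in auto)
  then have bound: "norm (d T) \<le> 2 * M * (iter_const T n * (T powr \<beta> * norm lam) ^ n)" for n
    using T by (simp add: powr_power power_mult_distrib mult_ac)
  have "(\<lambda>n. 2 * M * (iter_const T n * (T powr \<beta> * norm lam) ^ n)) \<longlonglongrightarrow> 2 * M * 0"
    by (intro tendsto_mult tendsto_const summable_LIMSEQ_zero summable_iter_const_power) simp
  then have "norm (d T) \<le> 2 * M * 0"
    using bound by (intro LIMSEQ_le_const) auto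
  then show ?thesis by (simp add: d_def)
qed

lemma volterra_sol_unique:
  assumes sol: "volterra_sol k lam \<psi>" and "T \<ge> 0"
  shows "\<psi> T = Phi T (- lam)"
proof (cases "T = 0")
  case True
  then show ?thesis using sol Phi_nonpos[of 0] unfolding volterra_sol_def by simp
next
  case False
  then have T: "T > 0" using \<open>T \<ge> 0\<close> by simp
  have "Bb T \<psi>" and \<psi>_eq: "\<And>t. t > 0 \<Longrightarrow> \<psi> t = 1 - lam * volterra_int k \<psi> t"
    using sol T unfolding volterra_sol_def by auto
  then obtain M\<psi> where M\<psi>: "\<And>s. s \<in> {0..T} \<Longrightarrow> norm (\<psi> s) \<le> M\<psi>"
    unfolding Bb_def bounded_iff by (auto simp del: atLeastAtMost_iff)
  define \<psi>T where "\<psi>T s = indicator {0..T} s *\<^sub>R \<psi> s" for s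
  define MP where "MP = (\<Sum>n. iter_const T n * (T powr \<beta> * norm lam) ^ n)"
  have "\<psi>T T = Phi T (- lam)"
  proof (rule volterra_eq_unique[OF T, where M = "max M\<psi> MP" and lam = lam])
    show "\<psi>T \<in> borel_measurable lborel"
      using \<open>Bb T \<psi>\<close> borel_measurable_restrict_space_iff[of "{0..T}" borel \<psi>]
      unfolding Bb_def \<psi>T_def by simp
    show "(\<lambda>t. Phi t (- lam)) \<in> borel_measurable lborel" by simp
    show "norm (\<psi>T t) \<le> max M\<psi> MP \<and> norm (Phi t (- lam)) \<le> max M\<psi> MP" if "0 < t" "t \<le> T" for t
      using M\<psi>[of t] Phi_bound[OF that(2) T, of "- lam"] that unfolding \<psi>T_def MP_def by auto
    show "\<psi>T t = 1 - lam * (\<integral>s. k0 t s *\<^sub>R \<psi>T s \<partial>lborel)" if t: "0 < t" "t \<le> T" for t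
    proof -
      have "volterra_int k \<psi> t = (\<integral>s. k0 t s *\<^sub>R \<psi>T s \<partial>lborel)"
        unfolding volterra_int_k0 using t
        by (intro Bochner_Integration.integral_cong) (auto simp: k0_def \<psi>T_def)
      then show ?thesis using \<psi>_eq[OF t(1)] t by (simp add: \<psi>T_def)
    qed
    show "Phi t (- lam) = 1 - lam * (\<integral>s. k0 t s *\<^sub>R Phi s (- lam) \<partial>lborel)" if "0 < t" for t
      using Phi_volterra[OF that, of "- lam"] by simp
  qed
  then show ?thesis using T by (simp add: \<psi>T_def)
qed

end

theorem corollary3p1:
  fixes k :: "real \<Rightarrow> real \<Rightarrow> real"
  assumes meas: "(\<lambda>p. k (fst p) (snd p)) \<in> borel_measurable (restrict_space borel ({0<..} \<times> {0<..}))"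
    and growth: "\<exists>\<alpha> \<epsilon>. 0 \<le> \<alpha> \<and> \<alpha> < 1 \<and> \<epsilon> > 0 \<and>
       (\<forall>T>0. \<exists>C. \<forall>t\<in>{0<..T}.
          set_integrable lborel {0<..<t} (\<lambda>s. \<bar>k t s\<bar> powr (1 + \<epsilon>)) \<and>
          t powr (\<alpha> - 1 / (1 + \<epsilon>)) *
            (set_lebesgue_integral lborel {0<..<t} (\<lambda>s. \<bar>k t s\<bar> powr (1 + \<epsilon>))) powr (1 / (1 + \<epsilon>))
          \<le> C)"
  shows "\<exists>\<Phi> :: real \<Rightarrow> complex \<Rightarrow> complex.
     (\<forall>lam. volterra_sol k lam (\<lambda>t. \<Phi> t (- lam))) \<and>
     (\<forall>lam \<psi>. volterra_sol k lam \<psi> \<longrightarrow> (\<forall>t\<ge>0. \<psi> t = \<Phi> t (- lam))) \<and>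
     (\<forall>K. compact K \<longrightarrow> uniform_limit K (\<lambda>t lam. \<Phi> t (- lam)) (\<lambda>_. 1) (at_right 0)) \<and>
     (\<forall>t\<ge>0. \<Phi> t holomorphic_on UNIV) \<and>
     (\<forall>t\<ge>0. \<forall>\<mu>. (\<lambda>n. complex_of_real (coeff_c k n t) * \<mu> ^ n) sums \<Phi> t \<mu>)"
proof -
  from growth obtain \<alpha> \<epsilon> where "volterra_kernel k \<alpha> \<epsilon>"
    using meas unfolding volterra_kernel_def by blast
  then interpret volterra_kernel k \<alpha> \<epsilon> .
  show ?thesis
    using Phi_volterra_sol volterra_sol_unique Phi_uniform_limit Phi_holomorphic Phi_sums
    by blast
qed

end
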